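(* Let $t\in[n]$. If $P$ is a prime ideal of $R$ minimal over $\mathcal{I}^{\langle t\rangle}$, then $P=P^{\langle t\rangle}_S$ for some maximal $t$-switchable set $S\subseteq N$.
   Context: Fix positive integers $n, r_1,\dots,r_n$, let $N=[r_1]\times\cdots\times[r_n]$, and let $R$ be the polynomial ring over a field in the variables $x_a$, $a\in N$. For $a,b\in N$ and $i\in[n]$, ${\rm s}(i,a,b)\in N$ has $i$-th component $b_i$ and other components equal to those of $a$. Let $d(a,b)=\#\{j: a_j\neq b_j\}$ and $f_{i,a,b}=x_ax_b-x_{{\rm s}(i,a,b)}x_{{\rm s}(i,b,a)}$. Let $\mathcal{I}^{\langle t\rangle}=(f_{i,a,b}: a,b\in N,\ d(a,b)=2,\ i\in[t])$. A subset $S\subseteq N$ is $t$-switchable if for all $a,b\in S$ with $d(a,b)=2$ and all $i\in[t]$, ${\rm s}(i,a,b)\in S$. Elements $a,b\in S$ are connected in $S$ if there are $a_0=a,\dots,a_k=b$ in $S$ with $d(a_{j-1},a_j)\le 1$ for all $j$. For $t$-switchable $S$: $\tilde{\mathcal{I}}^{\langle t\rangle}_S=(f_{i,a,b}: i\in[t],\ a,b \text{ connected in } S)$, $\mathrm{Var}^{\langle t\rangle}_S=(x_a: a\notin S)$, $P^{\langle t\rangle}_S=\mathrm{Var}^{\langle t\rangle}_S+\tilde{\mathcal{I}}^{\langle t\rangle}_S$. A $t$-switchable $S$ is maximal $t$-switchable if for every $t$-switchable $T$ properly containing $S$, $P^{\langle t\rangle}_S$ and $P^{\langle t\rangle}_T$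 are incomparable under inclusion. *)

theory Defs
  imports "HOL-Library.Poly_Mapping"
begin

text \<open>Tuples a in N = [r_1] x ... x [r_n] are lists of length n (0-based positions).
  Polynomials: the type (nat list =>0 nat) =>0 'k (finitely supported coefficient
  functions on monomials); the ring R of the paper is the subring of polynomials
  whose variables all lie in N.\<close>

type_synonym 'k mpoly = "(nat list \<Rightarrow>\<^sub>0 nat) \<Rightarrow>\<^sub>0 'k"

definition gridN :: "nat list \<Rightarrow> nat list set" where
  "gridN r = {a. length a = length r \<and> (\<forall>i<length r. 1 \<le> a ! i \<and> a ! i \<le> r ! i)}"

definition polyR :: "nat list \<Rightarrow> 'k::field mpoly set" where
  "polyR r = {p :: 'k mpoly. \<forall>m \<in> Poly_Mapping.keys p. Poly_Mapping.keys m \<subseteq> gridN r}"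

definition Xv :: "nat list \<Rightarrow> 'k::field mpoly" where
  "Xv a = Poly_Mapping.single (Poly_Mapping.single a (1::nat)) 1"

definition ideal_in :: "'a::comm_ring_1 set \<Rightarrow> 'a set \<Rightarrow> bool" where
  "ideal_in R I \<longleftrightarrow> I \<subseteq> R \<and> 0 \<in> I \<and> (\<forall>x\<in>I. \<forall>y\<in>I. x + y \<in> I)
     \<and> (\<forall>s\<in>R. \<forall>x\<in>I. s * x \<in> I)"

definition ideal_gen :: "'a::comm_ring_1 set \<Rightarrow> 'a set \<Rightarrow> 'a set" where
  "ideal_gen R G = \<Inter>{I. ideal_in R I \<and> G \<subseteq> I}"

definition ideal_sum :: "'a::comm_ring_1 set \<Rightarrow> 'a set \<Rightarrow> 'a set" where
  "ideal_sum I J = {x + y | x y. x \<in> I \<and> y \<in> J}"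

definition prime_in :: "'a::comm_ring_1 set \<Rightarrow> 'a set \<Rightarrow> bool" where
  "prime_in R P \<longleftrightarrow> ideal_in R P \<and> P \<noteq> R \<and>
     (\<forall>a\<in>R. \<forall>b\<in>R. a * b \<in> P \<longrightarrow> a \<in> P \<or> b \<in> P)"

definition minimal_prime_over :: "'a::comm_ring_1 set \<Rightarrow> 'a set \<Rightarrow> 'a set \<Rightarrow> bool" where
  "minimal_prime_over R I P \<longleftrightarrow> prime_in R P \<and> I \<subseteq> P \<and>
     (\<forall>Q. prime_in R Q \<and> I \<subseteq> Q \<and> Q \<subseteq> P \<longrightarrow> Q = P)"

text \<open>Combinatorics of the paper. Positions are 0-based: i in [t] becomes i < t.\<close>
definition dist :: "nat list \<Rightarrow> nat list \<Rightarrow> nat" where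
  "dist a b = card {j. j < length a \<and> a ! j \<noteq> b ! j}"

definition sw :: "nat \<Rightarrow> nat list \<Rightarrow> nat list \<Rightarrow> nat list" where
  "sw i a b = a[i := b ! i]"

definition fpol :: "nat \<Rightarrow> nat list \<Rightarrow> nat list \<Rightarrow> 'k::field mpoly" where
  "fpol i a b = Xv a * Xv b - Xv (sw i a b) * Xv (sw i b a)"

definition Iideal :: "nat list \<Rightarrow> nat \<Rightarrow> 'k::field mpoly set" where
  "Iideal r t = ideal_gen (polyR r)
     {fpol i a b | i a b. a \<in> gridN r \<and> b \<in> gridN r \<and> dist a b = 2 \<and> i < t}"

definition switchable :: "nat list \<Rightarrow> nat \<Rightarrow> nat list set \<Rightarrow> bool" where
  "switchable r t S \<longleftrightarrow> S \<subseteq> gridN r \<and>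
     (\<forall>a\<in>S. \<forall>b\<in>S. dist a b = 2 \<longrightarrow> (\<forall>i<t. sw i a b \<in> S))"

definition connected_in :: "nat list set \<Rightarrow> nat list \<Rightarrow> nat list \<Rightarrow> bool" where
  "connected_in S a b \<longleftrightarrow> a \<in> S \<and> b \<in> S \<and>
     (\<lambda>x y. x \<in> S \<and> y \<in> S \<and> dist x y \<le> 1)\<^sup>*\<^sup>* a b"

definition Itilde :: "nat list \<Rightarrow> nat \<Rightarrow> nat list set \<Rightarrow> 'k::field mpoly set" where
  "Itilde r t S = ideal_gen (polyR r) {fpol i a b | i a b. i < t \<and> connected_in S a b}"

definition VarS :: "nat list \<Rightarrow> nat list set \<Rightarrow> 'k::field mpoly set" where
  "VarS r S = ideal_gen (polyR r) {Xv a | a. a \<in> gridN r \<and> a \<notin> S}"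

definition PS :: "nat list \<Rightarrow> nat \<Rightarrow> nat list set \<Rightarrow> 'k::field mpoly set" where
  "PS r t S = ideal_sum (VarS r S) (Itilde r t S)"

definition max_switchable :: "'k::field itself \<Rightarrow> nat list \<Rightarrow> nat \<Rightarrow> nat list set \<Rightarrow> bool" where
  "max_switchable _ r t S \<longleftrightarrow> switchable r t S \<and>
     (\<forall>T. switchable r t T \<and> S \<subset> T \<longrightarrow>
        \<not> ((PS r t S :: 'k mpoly set) \<subseteq> PS r t T) \<and> \<not> ((PS r t T :: 'k mpoly set) \<subseteq> PS r t S))"

end

theory Submission
  imports Defs "HOL-Library.List_Lexorder"
begin

text \<open>Let \<open>P\<close> be a minimal prime over \<open>I\<^sup>\<langle>\<^sup>t\<^sup>\<rangle>\<close> and \<open>S\<close> the set of grid points \<open>a\<close>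
  with \<open>x\<^sub>a \<notin> P\<close>. Primality makes \<open>S\<close> \<open>t\<close>-switchable, and \<open>P \<supseteq> P\<^sub>S\<close>: walking from \<open>a\<close> to \<open>b\<close>
  inside \<open>S\<close>, a variable not in \<open>P\<close> times the next binomial of the walk is a combination of the
  previous one and a generator of \<open>I\<^sup>\<langle>\<^sup>t\<^sup>\<rangle>\<close>.
  Conversely \<open>P\<^sub>S\<close> is prime, being the kernel of the monomial map
  \<open>x\<^sub>a \<mapsto> y\<^bsub>C,1,a\<^sub>1\<^esub> \<cdots> y\<^bsub>C,t,a\<^sub>t\<^esub> z\<^bsub>C,(a\<^sub>t\<^sub>+\<^sub>1,\<dots>,a\<^sub>n)\<^esub>\<close> for \<open>a \<in> S\<close> in the
  component \<open>C\<close>, \<open>x\<^sub>a \<mapsto> 0\<close> for \<open>a \<notin> S\<close>: switch moves between connected points generate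
  all binomials of this kernel (induction on the degree). Since \<open>P\<^sub>S \<supseteq> I\<^sup>\<langle>\<^sup>t\<^sup>\<rangle>\<close>, minimality
  gives \<open>P = P\<^sub>S\<close>, and for switchable \<open>T \<supset> S\<close> the variables of \<open>T - S\<close> separate \<open>P\<^sub>S\<close> from
  \<open>P\<^sub>T\<close> while \<open>P\<^sub>T \<subseteq> P\<^sub>S\<close> would contradict minimality.\<close>

section \<open>Combinatorics of the grid\<close>

definition diff_pos :: "nat list \<Rightarrow> nat list \<Rightarrow> nat set" where
  "diff_pos a b = {j. j < length a \<and> a ! j \<noteq> b ! j}"

lemma dist_eq_card_diff_pos: "dist a b = card (diff_pos a b)"
  by (simp add: dist_def diff_pos_def)

lemma finite_diff_pos [simp]: "finite (diff_pos a b)"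
  by (simp add: diff_pos_def)

lemma dist_sym: "length a = length b \<Longrightarrow> dist a b = dist b a"
  unfolding dist_eq_card_diff_pos diff_pos_def by metis

lemma dist_le_1_cases:
  assumes "length a = length b" "dist a b \<le> 1"
  shows "b = a \<or> (\<exists>l<length a. b = a[l := b ! l] \<and> a ! l \<noteq> b ! l)"
proof (cases "diff_pos a b = {}")
  case True
  then have "a = b" using assms(1) by (auto simp: diff_pos_def intro: nth_equalityI)
  then show ?thesis by simp
next
  case False
  then obtain l where l: "l \<in> diff_pos a b" by auto
  have "card (diff_pos a b) \<le> 1" using assms(2) by (simp add: dist_eq_card_diff_pos)
  then have "\<forall>x\<in>diff_pos a b. \<forall>y\<in>diff_pos a b. x = y"
    using card_le_Suc0_iff_eq[OF finite_diff_pos] by simp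
  then have "diff_pos a b = {l}" using l by blast
  then have "\<forall>j<length a. j \<noteq> l \<longrightarrow> a ! j = b ! j" and "l < length a" "a ! l \<noteq> b ! l"
    by (auto simp: diff_pos_def)
  moreover from this have "b = a[l := b ! l]" using assms(1)
    by (intro nth_equalityI) (auto simp: nth_list_update)
  ultimately show ?thesis by blast
qed

lemma dist_list_update_le_1: "dist a (a[i := v]) \<le> 1"
proof -
  have "diff_pos a (a[i := v]) \<subseteq> {i}" by (auto simp: diff_pos_def) (metis nth_list_update_neq)
  then have "card (diff_pos a (a[i := v])) \<le> card {i}" by (intro card_mono) auto
  then show ?thesis by (simp add: dist_eq_card_diff_pos)
qed

lemma dist_eq_2I:
  assumes "length x = length y" "i < length x" "l < length x" "i \<noteq> l"
    and "\<And>j. j < length x \<Longrightarrow> x ! j \<noteq> y ! j \<longleftrightarrow> j = i \<or> j = l"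
  shows "dist x y = 2"
proof -
  have "diff_pos x y = {i, l}" using assms by (auto simp: diff_pos_def)
  then show ?thesis using assms(4) by (simp add: dist_eq_card_diff_pos)
qed

lemma dist_double_update:
  assumes "l < length a" "i < length a" "i \<noteq> l" "a ! l \<noteq> x" "a ! i \<noteq> y"
  shows "dist a (a[l := x, i := y]) = 2"
  using assms by (intro dist_eq_2I[where i = i and l = l]) (auto simp: nth_list_update)

lemma gridN_length: "a \<in> gridN r \<Longrightarrow> length a = length r"
  by (simp add: gridN_def)

lemma sw_in_gridN: "a \<in> gridN r \<Longrightarrow> b \<in> gridN r \<Longrightarrow> sw i a b \<in> gridN r"
  unfolding gridN_def sw_def by (cases "i < length r") (auto simp: nth_list_update)

lemma sw_eq_self: "a ! i = b ! i \<Longrightarrow> sw i a b = a"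
  unfolding sw_def by (metis list_update_id)

lemma sw_sw: "length a = length b \<Longrightarrow> i < length a \<Longrightarrow> sw i (sw i a b) (sw i b a) = a"
  by (simp add: sw_def)

lemma dist_sw_le_1: "dist a (sw i a b) \<le> 1"
  unfolding sw_def by (rule dist_list_update_le_1)

lemma dist_sw_other_le_1:
  assumes "length a = length b" "i < length a" "a ! i \<noteq> b ! i" "dist a b = 2"
  shows "dist (sw i a b) b \<le> 1"
proof -
  have "diff_pos (sw i a b) b \<subseteq> diff_pos a b - {i}"
    using assms(1,2) by (auto simp: sw_def diff_pos_def nth_list_update)
  then have "card (diff_pos (sw i a b) b) \<le> card (diff_pos a b - {i})" by (intro card_mono) auto
  also have "\<dots> = 1" using assms by (simp add: dist_eq_card_diff_pos diff_pos_def)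
  finally show ?thesis by (simp add: dist_eq_card_diff_pos)
qed

lemma dist_sw_sw:
  assumes "length a = length b" "i < length a" "a ! i \<noteq> b ! i"
  shows "dist (sw i a b) (sw i b a) = dist a b"
proof -
  have "diff_pos (sw i a b) (sw i b a) = diff_pos a b"
    using assms by (auto simp: sw_def diff_pos_def nth_list_update)
  then show ?thesis by (simp add: dist_eq_card_diff_pos)
qed

lemma nth_equalityI_take_drop:
  assumes "length a = length b" "\<And>j. j < t \<Longrightarrow> a ! j = b ! j" "drop t a = drop t b"
  shows "a = b"
proof (rule nth_equalityI)
  fix j assume j: "j < length a"
  show "a ! j = b ! j"
  proof (cases "j < t")
    case False
    then have "a ! j = drop t a ! (j - t)" "b ! j = drop t b ! (j - t)" using j assms(1) by auto
    then show ?thesis using assms(3) by simp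
  qed (use assms(2) in auto)
qed (rule assms(1))

lemma sw_update_pair:
  assumes "q = p[j := y]" "i \<noteq> j" "i < length p"
  shows "sw i (p[i := \<alpha>]) (q[i := \<beta>]) = p[i := \<beta>]" "sw i (q[i := \<beta>]) (p[i := \<alpha>]) = q[i := \<alpha>]"
  using assms by (simp_all add: sw_def list_update_swap)

lemma dist_update_pair:
  assumes "q = p[j := y]" "p ! j \<noteq> y" "i \<noteq> j" "i < length p" "j < length p" "\<alpha> \<noteq> \<beta>"
  shows "dist (p[i := \<alpha>]) (q[i := \<beta>]) = 2"
  using assms by (intro dist_eq_2I[where i = i and l = j]) (auto simp: nth_list_update)

definition adj_in :: "nat list set \<Rightarrow> nat list \<Rightarrow> nat list \<Rightarrow> bool" where
  "adj_in S x y \<longleftrightarrow> x \<in> S \<and> y \<in> S \<and> dist x y \<le> 1"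

lemma connected_in_iff_adj_in:
  "connected_in S a b \<longleftrightarrow> a \<in> S \<and> b \<in> S \<and> (adj_in S)\<^sup>*\<^sup>* a b"
  by (simp add: connected_in_def adj_in_def [abs_def])

lemma connected_inD: "connected_in S a b \<Longrightarrow> a \<in> S \<and> b \<in> S"
  by (simp add: connected_in_def)

lemma connected_in_refl: "a \<in> S \<Longrightarrow> connected_in S a a"
  by (simp add: connected_in_def)

lemma connected_in_adjI: "x \<in> S \<Longrightarrow> y \<in> S \<Longrightarrow> dist x y \<le> 1 \<Longrightarrow> connected_in S x y"
  by (auto simp: connected_in_def)

lemma connected_in_trans:
  "connected_in S a b \<Longrightarrow> connected_in S b c \<Longrightarrow> connected_in S a c"
  unfolding connected_in_iff_adj_in by (meson rtranclp_trans)

lemma connected_in_sym: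
  assumes "S \<subseteq> gridN r" "connected_in S a b"
  shows "connected_in S b a"
proof -
  have "adj_in S y x" if "adj_in S x y" for x y
  proof -
    have "x \<in> gridN r" "y \<in> gridN r" using that assms(1) by (auto simp: adj_in_def)
    then show ?thesis using that dist_sym[of x y] by (auto simp: adj_in_def gridN_length)
  qed
  then have "symp (adj_in S)" by (rule sympI)
  then show ?thesis using assms(2) unfolding connected_in_iff_adj_in
    by (blast dest: sympD[OF symp_rtranclp])
qed

locale switchable_set =
  fixes r :: "nat list" and t :: nat and S :: "nat list set"
  assumes switchable: "switchable r t S" and t_le_length: "t \<le> length r"
begin

lemma subset_gridN: "S \<subseteq> gridN r"
  using switchable by (simp add: switchable_def)

lemma length_mem: "a \<in> S \<Longrightarrow> length a = length r"
  using subset_gridN gridN_length by blast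

lemma connected_sym: "connected_in S a b \<Longrightarrow> connected_in S b a"
  by (rule connected_in_sym[OF subset_gridN])

text \<open>Induction along a path from \<open>a\<close> to \<open>b\<close>: when the path moves in a coordinate
  \<open>l \<noteq> i\<close>, the current point and the switched next point have distance 2.\<close>

lemma update_mem:
  assumes "connected_in S a b" "i < t"
  shows "a[i := b ! i] \<in> S"
proof -
  have "(adj_in S)\<^sup>*\<^sup>* a b" "a \<in> S" "b \<in> S" using assms(1) by (auto simp: connected_in_iff_adj_in)
  then show ?thesis
  proof (induction rule: converse_rtranclp_induct)
    case base
    then show ?case by simp
  next
    case (step a c)
    have aS: "a \<in> S" and cS: "c \<in> S" and dac: "dist a c \<le> 1" using step(1) by (auto simp: adj_in_def)
    have IH: "c[i := b ! i] \<in> S" using step cS by blast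
    have la: "length a = length r" "length c = length r" using aS cS length_mem by auto
    have il: "i < length a" using assms(2) t_le_length la by simp
    have "length a = length c" using la by simp
    from dist_le_1_cases[OF this dac]
    consider "c = a" | l x where "l < length a" "c = a[l := x]" "a ! l \<noteq> x"
      by blast
    then show ?case
    proof cases
      case 1
      then show ?thesis using IH by simp
    next
      case (2 l x)
      show ?thesis
      proof (cases "l = i \<or> a ! i = b ! i")
        case True
        then show ?thesis
        proof
          assume "l = i"
          then show ?thesis using IH 2(2) by simp
        next
          assume "a ! i = b ! i"
          then show ?thesis using aS by (metis list_update_id)
        qed
      next
        case False
        have "dist a (c[i := b ! i]) = 2"
          unfolding 2(2) using 2(1,3) il False by (intro dist_double_update) auto
        then have "sw i a (c[i := b ! i]) \<in> S"
          using switchable aS IH assms(2) unfolding switchable_def by blast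
        then show ?thesis using il la by (simp add: sw_def)
      qed
    qed
  qed
qed

lemma connected_update:
  assumes "connected_in S a b" "i < t"
  shows "connected_in S a (a[i := b ! i])"
proof (rule connected_in_adjI)
  show "a \<in> S" using connected_inD[OF assms(1)] by simp
  show "a[i := b ! i] \<in> S" by (rule update_mem[OF assms])
qed (rule dist_list_update_le_1)

end

section \<open>The polynomial ring and its ideals\<close>

lemma keys_add_nat: "Poly_Mapping.keys ((m1 :: 'a \<Rightarrow>\<^sub>0 nat) + m2) = Poly_Mapping.keys m1 \<union> Poly_Mapping.keys m2"
  by (auto simp: in_keys_iff lookup_add)

lemma polyR_zero [simp]: "0 \<in> polyR r"
  by (simp add: polyR_def)

lemma polyR_one: "1 \<in> polyR r"
  by (simp add: polyR_def)

lemma polyR_single: "Poly_Mapping.keys m \<subseteq> gridN r \<Longrightarrow> Poly_Mapping.single m c \<in> polyR r"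
  by (simp add: polyR_def)

lemma polyR_add: "p \<in> polyR r \<Longrightarrow> q \<in> polyR r \<Longrightarrow> p + q \<in> polyR r"
  unfolding polyR_def using keys_add[of p q] by blast

lemma polyR_uminus: "p \<in> polyR r \<Longrightarrow> - p \<in> polyR r"
  by (simp add: polyR_def)

lemma polyR_diff: "p \<in> polyR r \<Longrightarrow> q \<in> polyR r \<Longrightarrow> p - q \<in> polyR r"
  using polyR_add[of p r "- q"] polyR_uminus[of q r] by simp

lemma polyR_mult: "p \<in> polyR r \<Longrightarrow> q \<in> polyR r \<Longrightarrow> p * q \<in> polyR r"
  unfolding polyR_def using keys_mult[of p q] by (fastforce simp: keys_add_nat)

lemma Xv_in_polyR: "a \<in> gridN r \<Longrightarrow> Xv a \<in> polyR r"
  unfolding Xv_def by (rule polyR_single) simp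

lemma polyR_ideal: "ideal_in (polyR r) (polyR r)"
  unfolding ideal_in_def by (auto intro: polyR_add polyR_mult)

lemma ideal_in_subset: "ideal_in R I \<Longrightarrow> I \<subseteq> R"
  and ideal_in_zero: "ideal_in R I \<Longrightarrow> 0 \<in> I"
  and ideal_in_add: "ideal_in R I \<Longrightarrow> x \<in> I \<Longrightarrow> y \<in> I \<Longrightarrow> x + y \<in> I"
  and ideal_in_mult_left: "ideal_in R I \<Longrightarrow> s \<in> R \<Longrightarrow> x \<in> I \<Longrightarrow> s * x \<in> I"
  by (auto simp: ideal_in_def)

lemma ideal_in_mult_right: "ideal_in R I \<Longrightarrow> s \<in> R \<Longrightarrow> x \<in> I \<Longrightarrow> x * s \<in> I"
  by (metis ideal_in_mult_left mult.commute)

lemma ideal_in_diff: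
  assumes "ideal_in (polyR r) I" "x \<in> I" "y \<in> I"
  shows "x - y \<in> (I :: 'k::field mpoly set)"
proof -
  have "(- 1) * y \<in> I"
    using assms by (intro ideal_in_mult_left) (auto simp: polyR_def)
  then show ?thesis using ideal_in_add[OF assms(1,2), of "- y"] by simp
qed

lemma ideal_gen_ideal:
  assumes "G \<subseteq> polyR r"
  shows "ideal_in (polyR r) (ideal_gen (polyR r) (G :: 'k::field mpoly set))"
proof -
  let ?F = "{I. ideal_in (polyR r) I \<and> G \<subseteq> I}"
  have "polyR r \<in> ?F" using polyR_ideal assms by blast
  then have "\<Inter> ?F \<subseteq> polyR r" by blast
  moreover have "0 \<in> \<Inter> ?F" using ideal_in_zero by blast
  moreover have "\<forall>x\<in>\<Inter> ?F. \<forall>y\<in>\<Inter> ?F. x + y \<in> \<Inter> ?F" using ideal_in_add by blast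
  moreover have "\<forall>s\<in>polyR r. \<forall>x\<in>\<Inter> ?F. s * x \<in> \<Inter> ?F" using ideal_in_mult_left by blast
  ultimately show ?thesis unfolding ideal_gen_def ideal_in_def by blast
qed

lemma ideal_gen_subset: "G \<subseteq> ideal_gen R G"
  by (auto simp: ideal_gen_def)

lemma ideal_gen_least: "ideal_in R J \<Longrightarrow> G \<subseteq> J \<Longrightarrow> ideal_gen R G \<subseteq> J"
  by (auto simp: ideal_gen_def)

lemma ideal_sum_ideal:
  assumes I: "ideal_in (polyR r) I" and J: "ideal_in (polyR r) J"
  shows "ideal_in (polyR r) (ideal_sum I (J :: 'k::field mpoly set))"
  unfolding ideal_in_def
proof (intro conjI ballI)
  show "ideal_sum I J \<subseteq> polyR r"
    using ideal_in_subset[OF I] ideal_in_subset[OF J] by (auto simp: ideal_sum_def intro: polyR_add)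
  show "0 \<in> ideal_sum I J"
    using ideal_in_zero[OF I] ideal_in_zero[OF J] by (force simp: ideal_sum_def)
next
  fix u v assume "u \<in> ideal_sum I J" "v \<in> ideal_sum I J"
  then obtain x y x' y' where "u = x + y" "v = x' + y'" "x \<in> I" "y \<in> J" "x' \<in> I" "y' \<in> J"
    by (auto simp: ideal_sum_def)
  moreover have "x + y + (x' + y') = (x + x') + (y + y')" by (simp add: algebra_simps)
  ultimately show "u + v \<in> ideal_sum I J"
    unfolding ideal_sum_def using ideal_in_add[OF I] ideal_in_add[OF J] by blast
next
  fix s :: "'k mpoly" and u assume s: "s \<in> polyR r" and "u \<in> ideal_sum I J"
  then obtain x y where "u = x + y" "x \<in> I" "y \<in> J" by (auto simp: ideal_sum_def)
  moreover have "s * (x + y) = s * x + s * y" by (simp add: algebra_simps)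
  ultimately show "s * u \<in> ideal_sum I J"
    unfolding ideal_sum_def using ideal_in_mult_left[OF I s] ideal_in_mult_left[OF J s] by blast
qed

lemma ideal_sum_upper1: "ideal_in R J \<Longrightarrow> I \<subseteq> ideal_sum I J"
  by (force simp: ideal_sum_def ideal_in_def)

lemma ideal_sum_upper2: "ideal_in R I \<Longrightarrow> J \<subseteq> ideal_sum I J"
  by (force simp: ideal_sum_def ideal_in_def)

lemma ideal_sum_least: "ideal_in R K \<Longrightarrow> I \<subseteq> K \<Longrightarrow> J \<subseteq> K \<Longrightarrow> ideal_sum I J \<subseteq> K"
  unfolding ideal_sum_def ideal_in_def by blast

lemma prime_inD:
  "prime_in R P \<Longrightarrow> ideal_in R P"
  "prime_in R P \<Longrightarrow> a \<in> R \<Longrightarrow> b \<in> R \<Longrightarrow> a * b \<in> P \<Longrightarrow> a \<in> P \<or> b \<in> P"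
  by (auto simp: prime_in_def)

lemma fpol_in_polyR: "a \<in> gridN r \<Longrightarrow> b \<in> gridN r \<Longrightarrow> fpol i a b \<in> polyR r"
  unfolding fpol_def by (intro polyR_diff polyR_mult Xv_in_polyR sw_in_gridN)

lemma Itilde_ideal: "S \<subseteq> gridN r \<Longrightarrow> ideal_in (polyR r) (Itilde r t S :: 'k::field mpoly set)"
  unfolding Itilde_def by (rule ideal_gen_ideal) (auto dest!: connected_inD intro: fpol_in_polyR)

lemma VarS_ideal: "ideal_in (polyR r) (VarS r S :: 'k::field mpoly set)"
  unfolding VarS_def by (rule ideal_gen_ideal) (auto intro: Xv_in_polyR)

lemma PS_ideal: "S \<subseteq> gridN r \<Longrightarrow> ideal_in (polyR r) (PS r t S :: 'k::field mpoly set)"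
  unfolding PS_def by (intro ideal_sum_ideal VarS_ideal Itilde_ideal)

lemma fpol_in_Iideal:
  "a \<in> gridN r \<Longrightarrow> b \<in> gridN r \<Longrightarrow> dist a b = 2 \<Longrightarrow> i < t \<Longrightarrow> fpol i a b \<in> Iideal r t"
  unfolding Iideal_def by (rule subsetD[OF ideal_gen_subset]) blast

lemma fpol_in_Itilde: "i < t \<Longrightarrow> connected_in S a b \<Longrightarrow> fpol i a b \<in> Itilde r t S"
  unfolding Itilde_def by (rule subsetD[OF ideal_gen_subset]) blast

lemma Itilde_subset_PS: "S \<subseteq> gridN r \<Longrightarrow> (Itilde r t S :: 'k::field mpoly set) \<subseteq> PS r t S"
  unfolding PS_def by (rule ideal_sum_upper2[OF VarS_ideal])

lemma Xv_in_PS: "a \<in> gridN r \<Longrightarrow> a \<notin> S \<Longrightarrow> S \<subseteq> gridN r \<Longrightarrow> Xv a \<in> PS r t S"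
proof -
  assume "a \<in> gridN r" "a \<notin> S" "S \<subseteq> gridN r"
  then have "Xv a \<in> VarS r S" unfolding VarS_def by (intro subsetD[OF ideal_gen_subset]) blast
  then show ?thesis unfolding PS_def using ideal_sum_upper1[OF Itilde_ideal] \<open>S \<subseteq> gridN r\<close> by blast
qed

lemma PS_least:
  assumes "ideal_in (polyR r) K"
    and "\<And>a. a \<in> gridN r \<Longrightarrow> a \<notin> S \<Longrightarrow> Xv a \<in> K"
    and "\<And>i a b. i < t \<Longrightarrow> connected_in S a b \<Longrightarrow> fpol i a b \<in> K"
  shows "PS r t S \<subseteq> (K :: 'k::field mpoly set)"
  unfolding PS_def VarS_def Itilde_def using assms
  by (intro ideal_sum_least[OF assms(1)] ideal_gen_least) auto

lemma Iideal_least: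
  assumes "ideal_in (polyR r) K"
    and "\<And>i a b. a \<in> gridN r \<Longrightarrow> b \<in> gridN r \<Longrightarrow> dist a b = 2 \<Longrightarrow> i < t \<Longrightarrow> fpol i a b \<in> K"
  shows "Iideal r t \<subseteq> (K :: 'k::field mpoly set)"
  unfolding Iideal_def using assms by (intro ideal_gen_least) auto

section \<open>The monomial map of a switchable set\<close>

text \<open>For \<open>a \<in> S\<close> the variable \<open>x\<^sub>a\<close> is sent to \<open>y\<^bsub>C,1,a\<^sub>1\<^esub> \<cdots> y\<^bsub>C,t,a\<^sub>t\<^esub> z\<^bsub>C,(a\<^sub>t\<^sub>+\<^sub>1,\<dots>,a\<^sub>n)\<^esub>\<close>,
  where \<open>C\<close> is the connected component of \<open>a\<close> in \<open>S\<close>, represented by one of its elements;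
  variables outside \<open>S\<close> are sent to 0. The new variables are again encoded as lists,
  tagged by their head 0 or 1 so that no \<open>y\<close> coincides with a \<open>z\<close>.\<close>

definition comp_rep :: "nat list set \<Rightarrow> nat list \<Rightarrow> nat list" where
  "comp_rep S a = (SOME y. connected_in S a y)"

definition y_var :: "nat list set \<Rightarrow> nat list \<Rightarrow> nat \<Rightarrow> nat \<Rightarrow> nat list" where
  "y_var S a j v = 0 # j # v # comp_rep S a"

definition z_var :: "nat list set \<Rightarrow> nat \<Rightarrow> nat list \<Rightarrow> nat list" where
  "z_var S t a = 1 # comp_rep S a @ drop t a"

definition toric_exp :: "nat list set \<Rightarrow> nat \<Rightarrow> nat list \<Rightarrow> (nat list \<Rightarrow>\<^sub>0 nat)" where
  "toric_exp S t a =
     (\<Sum>j<t. Poly_Mapping.single (y_var S a j (a ! j)) 1) + Poly_Mapping.single (z_var S t a) 1"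

definition toric_monom :: "nat list set \<Rightarrow> nat \<Rightarrow> (nat list \<Rightarrow>\<^sub>0 nat) \<Rightarrow> (nat list \<Rightarrow>\<^sub>0 nat)" where
  "toric_monom S t m = Abs_poly_mapping (\<lambda>v.
     \<Sum>a\<in>Poly_Mapping.keys m. Poly_Mapping.lookup m a * Poly_Mapping.lookup (toric_exp S t a) v)"

definition toric_hom :: "nat list set \<Rightarrow> nat \<Rightarrow> 'k::field mpoly \<Rightarrow> 'k mpoly" where
  "toric_hom S t f = (\<Sum>m\<in>Poly_Mapping.keys f. Poly_Mapping.single (toric_monom S t m)
     (if Poly_Mapping.keys m \<subseteq> S then Poly_Mapping.lookup f m else 0))"

definition toric_kernel :: "nat list \<Rightarrow> nat \<Rightarrow> nat list set \<Rightarrow> 'k::field mpoly set" where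
  "toric_kernel r t S = {f \<in> polyR r. toric_hom S t f = 0}"

lemma lookup_toric_monom:
  "Poly_Mapping.lookup (toric_monom S t m) v =
     (\<Sum>a\<in>Poly_Mapping.keys m. Poly_Mapping.lookup m a * Poly_Mapping.lookup (toric_exp S t a) v)"
proof -
  have "{v. (\<Sum>a\<in>Poly_Mapping.keys m. Poly_Mapping.lookup m a * Poly_Mapping.lookup (toric_exp S t a) v) \<noteq> 0}
      \<subseteq> (\<Union>a\<in>Poly_Mapping.keys m. Poly_Mapping.keys (toric_exp S t a))"
    by (auto simp: in_keys_iff elim!: sum.not_neutral_contains_not_neutral)
  then have "finite {v. (\<Sum>a\<in>Poly_Mapping.keys m.
      Poly_Mapping.lookup m a * Poly_Mapping.lookup (toric_exp S t a) v) \<noteq> 0}"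
    by (rule finite_subset) simp
  then show ?thesis unfolding toric_monom_def by simp
qed

lemma sum_keys_superset:
  fixes m :: "'a \<Rightarrow>\<^sub>0 'b::semiring_0"
  assumes "finite A" "Poly_Mapping.keys m \<subseteq> A"
  shows "(\<Sum>a\<in>Poly_Mapping.keys m. Poly_Mapping.lookup m a * g a) = (\<Sum>a\<in>A. Poly_Mapping.lookup m a * g a)"
  by (rule sum.mono_neutral_left[OF assms]) (auto simp: in_keys_iff)

lemma toric_monom_add: "toric_monom S t (m1 + m2) = toric_monom S t m1 + toric_monom S t m2"
proof (rule poly_mapping_eqI)
  fix v
  let ?A = "Poly_Mapping.keys m1 \<union> Poly_Mapping.keys m2"
  let ?e = "\<lambda>a. Poly_Mapping.lookup (toric_exp S t a) v"
  have "Poly_Mapping.lookup (toric_monom S t (m1 + m2)) v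
      = (\<Sum>a\<in>?A. Poly_Mapping.lookup (m1 + m2) a * ?e a)"
    unfolding lookup_toric_monom by (rule sum_keys_superset) (auto simp: keys_add_nat)
  also have "\<dots> = (\<Sum>a\<in>?A. Poly_Mapping.lookup m1 a * ?e a) + (\<Sum>a\<in>?A. Poly_Mapping.lookup m2 a * ?e a)"
    by (simp add: lookup_add algebra_simps sum.distrib)
  also have "\<dots> = Poly_Mapping.lookup (toric_monom S t m1 + toric_monom S t m2) v"
    unfolding lookup_add lookup_toric_monom by (subst (1 2) sum_keys_superset[where A = ?A]) auto
  finally show "Poly_Mapping.lookup (toric_monom S t (m1 + m2)) v =
      Poly_Mapping.lookup (toric_monom S t m1 + toric_monom S t m2) v" .
qed

lemma toric_monom_zero [simp]: "toric_monom S t 0 = 0"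
  by (rule poly_mapping_eqI) (simp add: lookup_toric_monom)

lemma toric_monom_single [simp]: "toric_monom S t (Poly_Mapping.single a 1) = toric_exp S t a"
  by (rule poly_mapping_eqI) (simp add: lookup_toric_monom)

lemma toric_hom_superset:
  assumes "finite A" "Poly_Mapping.keys f \<subseteq> A"
  shows "toric_hom S t f = (\<Sum>m\<in>A. Poly_Mapping.single (toric_monom S t m)
      (if Poly_Mapping.keys m \<subseteq> S then Poly_Mapping.lookup f m else 0))"
  unfolding toric_hom_def by (rule sum.mono_neutral_left[OF assms]) (auto simp: in_keys_iff)

lemma toric_hom_add: "toric_hom S t (f + g) = toric_hom S t f + toric_hom S t (g :: 'k::field mpoly)"
proof -
  let ?A = "Poly_Mapping.keys f \<union> Poly_Mapping.keys g"
  let ?s = "\<lambda>h m. Poly_Mapping.single (toric_monom S t m)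
      (if Poly_Mapping.keys m \<subseteq> S then Poly_Mapping.lookup h m else 0)"
  have "toric_hom S t (f + g) = (\<Sum>m\<in>?A. ?s (f + g) m)"
    by (rule toric_hom_superset) (use keys_add[of f g] in auto)
  also have "\<dots> = (\<Sum>m\<in>?A. ?s f m) + (\<Sum>m\<in>?A. ?s g m)"
    unfolding sum.distrib[symmetric] by (intro sum.cong refl) (auto simp: lookup_add single_add)
  also have "\<dots> = toric_hom S t f + toric_hom S t g"
    by (subst (1 2) toric_hom_superset[where A = ?A]) auto
  finally show ?thesis .
qed

lemma toric_hom_zero [simp]: "toric_hom S t (0 :: 'k::field mpoly) = 0"
  by (simp add: toric_hom_def)

lemma toric_hom_sum: "toric_hom S t (sum (F :: _ \<Rightarrow> 'k::field mpoly) A) = (\<Sum>x\<in>A. toric_hom S t (F x))"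
  by (induction A rule: infinite_finite_induct) (auto simp: toric_hom_add)

lemma toric_hom_diff: "toric_hom S t (f - g) = toric_hom S t f - toric_hom S t (g :: 'k::field mpoly)"
  using toric_hom_add[of S t "f - g" g] by (simp add: eq_diff_eq)

lemma toric_hom_single:
  "toric_hom S t (Poly_Mapping.single m (c :: 'k::field)) =
     Poly_Mapping.single (toric_monom S t m) (if Poly_Mapping.keys m \<subseteq> S then c else 0)"
  by (cases "c = 0") (auto simp: toric_hom_def)

lemma poly_mapping_sum_single:
  "f = (\<Sum>m\<in>Poly_Mapping.keys f. Poly_Mapping.single m (Poly_Mapping.lookup f m))"
  by (rule poly_mapping_eqI) (simp add: lookup_sum lookup_single when_def in_keys_iff)

lemma toric_hom_mult: "toric_hom S t (f * g) = toric_hom S t f * toric_hom S t (g :: 'k::field mpoly)"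
proof -
  let ?s = "\<lambda>m. Poly_Mapping.single m (Poly_Mapping.lookup f m)"
  let ?u = "\<lambda>m. Poly_Mapping.single m (Poly_Mapping.lookup g m)"
  have single: "toric_hom S t (?s m * ?u m') = toric_hom S t (?s m) * toric_hom S t (?u m')" for m m'
    by (simp add: mult_single toric_hom_single toric_monom_add keys_add_nat)
  have "f * g = (\<Sum>m\<in>Poly_Mapping.keys f. ?s m) * (\<Sum>m\<in>Poly_Mapping.keys g. ?u m)"
    using poly_mapping_sum_single[of f] poly_mapping_sum_single[of g] by simp
  also have "\<dots> = (\<Sum>m\<in>Poly_Mapping.keys f. \<Sum>m'\<in>Poly_Mapping.keys g. ?s m * ?u m')"
    by (rule sum_product)
  finally have "toric_hom S t (f * g) =
      (\<Sum>m\<in>Poly_Mapping.keys f. toric_hom S t (?s m)) * (\<Sum>m\<in>Poly_Mapping.keys g. toric_hom S t (?u m))"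
    by (simp add: toric_hom_sum single sum_product)
  also have "\<dots> = toric_hom S t f * toric_hom S t g"
    using poly_mapping_sum_single[of f] poly_mapping_sum_single[of g]
    by (simp add: toric_hom_sum[symmetric])
  finally show ?thesis .
qed

lemma toric_hom_one [simp]: "toric_hom S t (1 :: 'k::field mpoly) = 1"
  by (simp add: toric_hom_def lookup_one)

lemma toric_hom_Xv:
  "toric_hom S t (Xv a :: 'k::field mpoly) = (if a \<in> S then Poly_Mapping.single (toric_exp S t a) 1 else 0)"
  unfolding Xv_def toric_hom_single toric_monom_single by simp

lemma lookup_toric_hom:
  "Poly_Mapping.lookup (toric_hom S t (f :: 'k::field mpoly)) k =
     (\<Sum>m\<in>Poly_Mapping.keys f.
        if Poly_Mapping.keys m \<subseteq> S \<and> toric_monom S t m = k then Poly_Mapping.lookup f m else 0)"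
  unfolding toric_hom_def lookup_sum by (intro sum.cong) (auto simp: lookup_single when_def)

text \<open>The import of \<open>List_Lexorder\<close> is needed here: it orders the monomials linearly, which makes
  the polynomial type an integral domain.\<close>

lemma toric_kernel_prime: "prime_in (polyR r) (toric_kernel r t S :: 'k::field mpoly set)"
  unfolding prime_in_def ideal_in_def toric_kernel_def
proof (intro conjI ballI impI)
  show "{f \<in> polyR r. toric_hom S t f = 0} \<noteq> (polyR r :: 'k mpoly set)"
    using polyR_one by force
qed (auto simp: toric_hom_add toric_hom_mult intro: polyR_add polyR_mult)

context switchable_set
begin

lemma connected_comp_rep: "a \<in> S \<Longrightarrow> connected_in S a (comp_rep S a)"
  unfolding comp_rep_def by (rule someI[of _ a]) (rule connected_in_refl)

lemma comp_rep_eq: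
  assumes "connected_in S a b"
  shows "comp_rep S a = comp_rep S b"
proof -
  have "connected_in S a = connected_in S b"
    using assms connected_sym connected_in_trans by (intro ext) blast
  then show ?thesis unfolding comp_rep_def by simp
qed

lemma connected_if_comp_rep_eq:
  assumes "a \<in> S" "b \<in> S" "comp_rep S a = comp_rep S b"
  shows "connected_in S a b"
proof -
  have "connected_in S (comp_rep S b) b" using connected_comp_rep[OF assms(2)] by (rule connected_sym)
  then show ?thesis using connected_comp_rep[OF assms(1)] assms(3) connected_in_trans by simp
qed

lemma z_var_eqD:
  assumes "a \<in> S" "b \<in> S" "z_var S t a = z_var S t b"
  shows "connected_in S a b" "drop t a = drop t b"
proof -
  have "length (comp_rep S a) = length (comp_rep S b)"
    using connected_inD[OF connected_comp_rep] assms(1,2) length_mem by simp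
  then have "comp_rep S a = comp_rep S b" "drop t a = drop t b"
    using assms(3) by (auto simp: z_var_def)
  then show "connected_in S a b" "drop t a = drop t b"
    using connected_if_comp_rep_eq assms(1,2) by auto
qed

lemma lookup_toric_exp:
  "Poly_Mapping.lookup (toric_exp S t a) k =
     (\<Sum>j<t. if y_var S a j (a ! j) = k then 1 else 0) + (if z_var S t a = k then 1 else 0)"
  unfolding toric_exp_def lookup_add lookup_sum lookup_single when_def by simp

lemma lookup_toric_exp_nonzero_cases:
  assumes "Poly_Mapping.lookup (toric_exp S t a) k \<noteq> 0"
  shows "(\<exists>j<t. k = y_var S a j (a ! j)) \<or> k = z_var S t a"
  using assms unfolding lookup_toric_exp by (auto split: if_splits intro!: sum.neutral)

lemma lookup_toric_exp_z_var: "Poly_Mapping.lookup (toric_exp S t a) (z_var S t a) \<noteq> 0"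
  unfolding lookup_toric_exp by simp

lemma lookup_toric_exp_y_var:
  assumes "j < t"
  shows "Poly_Mapping.lookup (toric_exp S t a) (y_var S a j (a ! j)) \<noteq> 0"
  using assms unfolding lookup_toric_exp by (auto simp: sum_eq_0_iff)

lemma lookup_toric_monom_nonzero_iff:
  "Poly_Mapping.lookup (toric_monom S t m) k \<noteq> 0 \<longleftrightarrow>
     (\<exists>a\<in>Poly_Mapping.keys m. Poly_Mapping.lookup (toric_exp S t a) k \<noteq> 0)"
  unfolding lookup_toric_monom by (simp add: in_keys_iff)

lemma toric_exp_switch:
  assumes "connected_in S b c" "i < t"
  shows "toric_exp S t (b[i := c ! i]) + toric_exp S t (c[i := b ! i]) = toric_exp S t b + toric_exp S t c"
proof -
  have cb: "connected_in S c b" using assms(1) by (rule connected_sym)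
  have r1: "comp_rep S (b[i := c ! i]) = comp_rep S b"
    using comp_rep_eq[OF connected_update[OF assms]] by simp
  have r2: "comp_rep S (c[i := b ! i]) = comp_rep S b"
    using comp_rep_eq[OF connected_update[OF cb assms(2)]] comp_rep_eq[OF cb] by simp
  have r3: "comp_rep S c = comp_rep S b" using comp_rep_eq[OF cb] .
  have "i < length b" "i < length c"
    using connected_inD[OF assms(1)] length_mem assms(2) t_le_length by auto
  then have "Poly_Mapping.single (y_var S b j ((b[i := c ! i]) ! j)) 1
        + Poly_Mapping.single (y_var S b j ((c[i := b ! i]) ! j)) 1
      = Poly_Mapping.single (y_var S b j (b ! j)) (1 :: nat)
        + Poly_Mapping.single (y_var S b j (c ! j)) 1" for j
    by (cases "j = i") (auto simp: add.commute)
  then have y: "(\<Sum>j<t. Poly_Mapping.single (y_var S b j ((b[i := c ! i]) ! j)) 1)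
        + (\<Sum>j<t. Poly_Mapping.single (y_var S b j ((c[i := b ! i]) ! j)) 1)
      = (\<Sum>j<t. Poly_Mapping.single (y_var S b j (b ! j)) (1 :: nat))
        + (\<Sum>j<t. Poly_Mapping.single (y_var S b j (c ! j)) 1)"
    by (simp add: sum.distrib[symmetric])
  have "y_var S (b[i := c ! i]) = y_var S b" "y_var S (c[i := b ! i]) = y_var S b" "y_var S c = y_var S b"
    using r1 r2 r3 by (simp_all add: y_var_def fun_eq_iff)
  moreover have "z_var S t (b[i := c ! i]) = z_var S t b" "z_var S t (c[i := b ! i]) = z_var S t c"
    using r1 r2 r3 assms(2) by (simp_all add: z_var_def)
  ultimately show ?thesis
    unfolding toric_exp_def using y by (simp add: ac_simps)
qed

lemma toric_hom_fpol:
  assumes "connected_in S a b" "i < t"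
  shows "toric_hom S t (fpol i a b :: 'k::field mpoly) = 0"
proof -
  have ba: "connected_in S b a" using assms(1) by (rule connected_sym)
  have "a \<in> S" "b \<in> S" "a[i := b ! i] \<in> S" "b[i := a ! i] \<in> S"
    using connected_inD[OF assms(1)] update_mem[OF assms] update_mem[OF ba assms(2)] by auto
  then show ?thesis
    using toric_exp_switch[OF assms]
    by (simp add: fpol_def sw_def toric_hom_diff toric_hom_mult toric_hom_Xv mult_single add.commute)
qed

lemma PS_subset_toric_kernel: "PS r t S \<subseteq> (toric_kernel r t S :: 'k::field mpoly set)"
proof (rule PS_least)
  show "ideal_in (polyR r) (toric_kernel r t S :: 'k mpoly set)"
    using toric_kernel_prime by (rule prime_inD)
  show "Xv a \<in> (toric_kernel r t S :: 'k mpoly set)" if "a \<in> gridN r" "a \<notin> S" for a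
    using that by (simp add: toric_kernel_def Xv_in_polyR toric_hom_Xv)
  show "fpol i a b \<in> (toric_kernel r t S :: 'k mpoly set)" if "i < t" "connected_in S a b" for i a b
    using that connected_inD[OF that(2)] subset_gridN
    by (auto simp: toric_kernel_def toric_hom_fpol intro!: fpol_in_polyR)
qed

lemma Xv_notin_toric_kernel: "a \<in> S \<Longrightarrow> Xv a \<notin> (toric_kernel r t S :: 'k::field mpoly set)"
  by (simp add: toric_kernel_def toric_hom_Xv) (metis lookup_single_eq lookup_zero one_neq_zero)

text \<open>A switch binomial of two points of distance 2 either comes from a connected pair
  (the switched point lies between them), or both of its terms vanish under the monomial map,
  because switching twice gives back the original pair.\<close>

lemma Iideal_subset_toric_kernel: "Iideal r t \<subseteq> (toric_kernel r t S :: 'k::field mpoly set)"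
proof (rule Iideal_least)
  show "ideal_in (polyR r) (toric_kernel r t S :: 'k mpoly set)"
    using toric_kernel_prime by (rule prime_inD)
  fix i a b assume a: "a \<in> gridN r" and b: "b \<in> gridN r" and d: "dist a b = 2" and i: "i < t"
  have len: "length a = length b" "i < length a" using a b i t_le_length by (auto simp: gridN_length)
  have "toric_hom S t (fpol i a b :: 'k mpoly) = 0"
  proof (cases "a ! i = b ! i")
    case True
    then show ?thesis by (simp add: fpol_def sw_eq_self)
  next
    case ne: False
    show ?thesis
    proof (cases "a \<in> S \<and> b \<in> S")
      case True
      then have "sw i a b \<in> S" using switchable d i by (simp add: switchable_def)
      then have "connected_in S a (sw i a b)" "connected_in S (sw i a b) b"
        using True dist_sw_le_1 dist_sw_other_le_1[OF len ne d] by (auto intro: connected_in_adjI)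
      then show ?thesis using i by (blast intro: toric_hom_fpol connected_in_trans)
    next
      case False
      have "\<not> (sw i a b \<in> S \<and> sw i b a \<in> S)"
      proof
        assume sS: "sw i a b \<in> S \<and> sw i b a \<in> S"
        have d2: "dist (sw i a b) (sw i b a) = 2" using dist_sw_sw[OF len ne] d by simp
        have d2': "dist (sw i b a) (sw i a b) = 2"
          using d2 dist_sym[of "sw i a b" "sw i b a"] len by (simp add: sw_def)
        have "sw i (sw i a b) (sw i b a) \<in> S" "sw i (sw i b a) (sw i a b) \<in> S"
          using switchable sS d2 d2' i unfolding switchable_def by blast+
        moreover have "sw i (sw i b a) (sw i a b) = b" using sw_sw[of b a i] len by simp
        ultimately show False using False sw_sw[OF len] by simp
      qed
      then show ?thesis using False
        by (auto simp: fpol_def toric_hom_diff toric_hom_mult toric_hom_Xv)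
    qed
  qed
  then show "fpol i a b \<in> (toric_kernel r t S :: 'k mpoly set)"
    using fpol_in_polyR[OF a b] by (simp add: toric_kernel_def)
qed

end

section \<open>Binomials in the kernel of the monomial map\<close>

definition monomial :: "(nat list \<Rightarrow>\<^sub>0 nat) \<Rightarrow> 'k::field mpoly" where
  "monomial U = Poly_Mapping.single U 1"

definition total_degree :: "('a \<Rightarrow>\<^sub>0 nat) \<Rightarrow> nat" where
  "total_degree U = (\<Sum>k\<in>Poly_Mapping.keys U. Poly_Mapping.lookup U k)"

lemma monomial_add: "(monomial (U + W) :: 'k::field mpoly) = monomial U * monomial W"
  by (simp add: monomial_def mult_single)

lemma monomial_single: "(monomial (Poly_Mapping.single a 1) :: 'k::field mpoly) = Xv a"
  by (simp add: monomial_def Xv_def)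

lemma total_degree_add: "total_degree (U + W) = total_degree U + total_degree W"
  unfolding total_degree_def by (rule setsum_keys_plus_distrib) (auto simp: lookup_add)

lemma total_degree_single: "total_degree (Poly_Mapping.single a 1) = 1"
  by (simp add: total_degree_def)

lemma total_degree_eq_0_iff: "total_degree U = 0 \<longleftrightarrow> U = 0"
  by (auto simp: total_degree_def in_keys_iff intro: poly_mapping_eqI)

lemma poly_mapping_remove_key:
  fixes V :: "'a \<Rightarrow>\<^sub>0 nat"
  assumes "a \<in> Poly_Mapping.keys V"
  obtains V' where "V = Poly_Mapping.single a 1 + V'" "Poly_Mapping.keys V' \<subseteq> Poly_Mapping.keys V"
    "\<And>k. k \<noteq> a \<Longrightarrow> Poly_Mapping.lookup V' k = Poly_Mapping.lookup V k"
proof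
  let ?V' = "V - Poly_Mapping.single a 1"
  have "Poly_Mapping.lookup V a \<noteq> 0" using assms by (simp add: in_keys_iff)
  then show "V = Poly_Mapping.single a 1 + ?V'"
    by (intro poly_mapping_eqI) (auto simp: lookup_add lookup_single when_def lookup_minus)
  show "Poly_Mapping.keys ?V' \<subseteq> Poly_Mapping.keys V"
    by (auto simp: in_keys_iff lookup_minus lookup_single when_def split: if_splits)
  show "Poly_Mapping.lookup ?V' k = Poly_Mapping.lookup V k" if "k \<noteq> a" for k
    using that by (simp add: lookup_minus lookup_single when_def)
qed

context switchable_set
begin

lemma toric_monom_eq_0_iff: "toric_monom S t V = 0 \<longleftrightarrow> V = 0"
proof
  assume "toric_monom S t V = 0"
  then have "Poly_Mapping.lookup (toric_exp S t a) (z_var S t a) = 0" if "a \<in> Poly_Mapping.keys V" for a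
    using that lookup_toric_monom_nonzero_iff[of V "z_var S t a"] by auto
  then have "Poly_Mapping.keys V = {}" using lookup_toric_exp_z_var by blast
  then show "V = 0" by simp
qed simp

lemma switch_move:
  assumes V: "Poly_Mapping.keys V \<subseteq> S" and b: "b \<in> Poly_Mapping.keys V" and c: "c \<in> Poly_Mapping.keys V"
    and "b \<noteq> c" and bc: "connected_in S b c" and i: "i < t"
  shows "\<exists>V'. Poly_Mapping.keys V' \<subseteq> S \<and> toric_monom S t V' = toric_monom S t V \<and>
    b[i := c ! i] \<in> Poly_Mapping.keys V' \<and> monomial V - monomial V' \<in> (Itilde r t S :: 'k::field mpoly set)"
proof -
  obtain V1 where V1: "V = Poly_Mapping.single b 1 + V1" "Poly_Mapping.keys V1 \<subseteq> Poly_Mapping.keys V"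
    "\<And>k. k \<noteq> b \<Longrightarrow> Poly_Mapping.lookup V1 k = Poly_Mapping.lookup V k"
    using b by (rule poly_mapping_remove_key) blast
  have "c \<in> Poly_Mapping.keys V1" using V1(3)[of c] \<open>b \<noteq> c\<close> c by (simp add: in_keys_iff)
  then obtain W where W: "V1 = Poly_Mapping.single c 1 + W" "Poly_Mapping.keys W \<subseteq> Poly_Mapping.keys V1"
    by (rule poly_mapping_remove_key)
  define b' where "b' = b[i := c ! i]"
  define c' where "c' = c[i := b ! i]"
  define V' where "V' = Poly_Mapping.single b' 1 + (Poly_Mapping.single c' 1 + W)"
  have VW: "V = Poly_Mapping.single b 1 + (Poly_Mapping.single c 1 + W)" using V1(1) W(1) by simp
  have WS: "Poly_Mapping.keys W \<subseteq> S" using W(2) V1(2) V by blast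
  have "b' \<in> S" "c' \<in> S"
    unfolding b'_def c'_def using update_mem[OF bc i] update_mem[OF connected_sym[OF bc] i] .
  then have keys: "Poly_Mapping.keys V' \<subseteq> S" using WS by (simp add: V'_def keys_add_nat)
  have "toric_monom S t V' = (toric_exp S t b' + toric_exp S t c') + toric_monom S t W"
    unfolding V'_def by (simp add: toric_monom_add toric_monom_single[simplified] add.assoc)
  also have "\<dots> = (toric_exp S t b + toric_exp S t c) + toric_monom S t W"
    unfolding b'_def c'_def by (simp only: toric_exp_switch[OF bc i])
  also have "\<dots> = toric_monom S t V"
    unfolding VW by (simp add: toric_monom_add toric_monom_single[simplified] add.assoc)
  finally have image: "toric_monom S t V' = toric_monom S t V" .
  have mem: "b' \<in> Poly_Mapping.keys V'" by (simp add: V'_def keys_add_nat)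
  have "(monomial V :: 'k mpoly) - monomial V' = monomial W * (Xv b * Xv c - Xv b' * Xv c')"
    unfolding VW V'_def monomial_add monomial_single by (simp add: algebra_simps)
  also have "\<dots> = monomial W * fpol i b c"
    by (simp add: fpol_def sw_def b'_def c'_def)
  finally have diff: "(monomial V :: 'k mpoly) - monomial V' = monomial W * fpol i b c" .
  have "monomial W \<in> (polyR r :: 'k mpoly set)"
    using WS subset_gridN unfolding monomial_def by (intro polyR_single) blast
  then have "monomial W * fpol i b c \<in> (Itilde r t S :: 'k mpoly set)"
    by (rule ideal_in_mult_left[OF Itilde_ideal[OF subset_gridN] _ fpol_in_Itilde[OF i bc]])
  then show ?thesis
    using keys image mem diff unfolding b'_def[symmetric] by (intro exI[of _ V']) simp
qed

lemma toric_monom_lookup_obtain: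
  assumes "toric_monom S t V = toric_monom S t U" "a \<in> Poly_Mapping.keys U"
    and "Poly_Mapping.lookup (toric_exp S t a) k \<noteq> 0"
  obtains c where "c \<in> Poly_Mapping.keys V" "Poly_Mapping.lookup (toric_exp S t c) k \<noteq> 0"
proof -
  have "Poly_Mapping.lookup (toric_monom S t U) k \<noteq> 0"
    using assms(2,3) lookup_toric_monom_nonzero_iff by blast
  then have "\<exists>c\<in>Poly_Mapping.keys V. Poly_Mapping.lookup (toric_exp S t c) k \<noteq> 0"
    using assms(1) lookup_toric_monom_nonzero_iff[of V k] by simp
  then show ?thesis using that by blast
qed

text \<open>The \<open>y\<close>-variable \<open>y\<^bsub>C,i,a\<^sub>i\<^esub>\<close> of the common image supplies a point \<open>c\<close> of \<open>V\<close> to switch with,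
  which moves \<open>b\<close> one coordinate closer to \<open>a\<close>.\<close>

lemma move_to_key:
  assumes U: "Poly_Mapping.keys U \<subseteq> S" "a \<in> Poly_Mapping.keys U"
    and "Poly_Mapping.keys V \<subseteq> S" "toric_monom S t V = toric_monom S t U"
    and "b \<in> Poly_Mapping.keys V" "z_var S t b = z_var S t a"
  shows "\<exists>V'. a \<in> Poly_Mapping.keys V' \<and> Poly_Mapping.keys V' \<subseteq> S \<and>
    toric_monom S t V' = toric_monom S t U \<and> monomial V - monomial V' \<in> (Itilde r t S :: 'k::field mpoly set)"
  using assms(3-)
proof (induction "card {j \<in> {..<t}. b ! j \<noteq> a ! j}" arbitrary: V b rule: less_induct)
  case less
  have aS: "a \<in> S" and bS: "b \<in> S" using U less.prems by auto
  have ba: "connected_in S b a" "drop t b = drop t a" using z_var_eqD[OF bS aS less.prems(4)] by auto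
  have J: "ideal_in (polyR r) (Itilde r t S :: 'k mpoly set)" by (rule Itilde_ideal[OF subset_gridN])
  show ?case
  proof (cases "\<exists>i<t. b ! i \<noteq> a ! i")
    case False
    have "b = a"
      by (rule nth_equalityI_take_drop[where t = t])
        (use False ba(2) length_mem[OF aS] length_mem[OF bS] in auto)
    then show ?thesis using less.prems ideal_in_zero[OF J] by (intro exI[of _ V]) simp
  next
    case True
    then obtain i where i: "i < t" "b ! i \<noteq> a ! i" by blast
    obtain c where c: "c \<in> Poly_Mapping.keys V"
      "Poly_Mapping.lookup (toric_exp S t c) (y_var S a i (a ! i)) \<noteq> 0"
      using toric_monom_lookup_obtain[OF less.prems(2) U(2) lookup_toric_exp_y_var[OF i(1)]] .
    then have ci: "c ! i = a ! i" and rep: "comp_rep S c = comp_rep S a"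
      using lookup_toric_exp_nonzero_cases[OF c(2)] by (auto simp: y_var_def z_var_def)
    have "c \<in> S" using c(1) less.prems(1) by blast
    then have bc: "connected_in S b c"
      using connected_in_trans[OF ba(1) connected_sym[OF connected_if_comp_rep_eq[OF _ aS rep]]] by blast
    have "b \<noteq> c" using ci i(2) by auto
    define b' where "b' = b[i := c ! i]"
    obtain V' where V': "Poly_Mapping.keys V' \<subseteq> S" "toric_monom S t V' = toric_monom S t V"
      "b' \<in> Poly_Mapping.keys V'" "monomial V - monomial V' \<in> (Itilde r t S :: 'k::field mpoly set)"
      using switch_move[OF less.prems(1,3) c(1) \<open>b \<noteq> c\<close> bc i(1)] unfolding b'_def by blast
    have z: "z_var S t b' = z_var S t a"
      using comp_rep_eq[OF connected_update[OF bc i(1)]] i(1) less.prems(4)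
      by (simp add: b'_def z_var_def)
    have D: "{j \<in> {..<t}. b' ! j \<noteq> a ! j} = {j \<in> {..<t}. b ! j \<noteq> a ! j} - {i}"
      using ci i(1) length_mem[OF bS] t_le_length by (auto simp: b'_def nth_list_update)
    have card_less: "card {j \<in> {..<t}. b' ! j \<noteq> a ! j} < card {j \<in> {..<t}. b ! j \<noteq> a ! j}"
      unfolding D by (rule card_Diff1_less) (use i in auto)
    have "\<exists>V''. a \<in> Poly_Mapping.keys V'' \<and> Poly_Mapping.keys V'' \<subseteq> S \<and>
        toric_monom S t V'' = toric_monom S t U \<and> monomial V' - monomial V'' \<in> (Itilde r t S :: 'k mpoly set)"
      by (rule less.hyps[OF card_less]) (use V' z less.prems(2) in auto)
    then obtain V'' where V'': "a \<in> Poly_Mapping.keys V''" "Poly_Mapping.keys V'' \<subseteq> S"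
      "toric_monom S t V'' = toric_monom S t U" "monomial V' - monomial V'' \<in> (Itilde r t S :: 'k mpoly set)"
      by blast
    have "(monomial V - monomial V') + (monomial V' - monomial V'') \<in> (Itilde r t S :: 'k mpoly set)"
      using ideal_in_add[OF J V'(4) V''(4)] .
    then have "monomial V - monomial V'' \<in> (Itilde r t S :: 'k mpoly set)" by simp
    then show ?thesis using V''(1-3) by blast
  qed
qed

text \<open>The \<open>z\<close>-variable of a point \<open>a\<close> of \<open>U\<close> locates a point of \<open>V\<close> that can be moved onto \<open>a\<close>;
  then cancel \<open>x\<^sub>a\<close> and induct on the degree.\<close>

lemma binomial_in_Itilde:
  assumes "Poly_Mapping.keys U \<subseteq> S" "Poly_Mapping.keys V \<subseteq> S" "toric_monom S t U = toric_monom S t V"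
  shows "monomial U - monomial V \<in> (Itilde r t S :: 'k::field mpoly set)"
  using assms
proof (induction "total_degree U" arbitrary: U V)
  case 0
  then have "U = 0" by (simp add: total_degree_eq_0_iff)
  moreover from this have "V = 0" using "0.prems"(3) toric_monom_eq_0_iff by simp
  ultimately show ?case using ideal_in_zero[OF Itilde_ideal[OF subset_gridN]] by simp
next
  case (Suc n)
  have J: "ideal_in (polyR r) (Itilde r t S :: 'k mpoly set)" by (rule Itilde_ideal[OF subset_gridN])
  have "U \<noteq> 0" using Suc.hyps(2) by (auto simp: total_degree_def)
  then obtain a where a: "a \<in> Poly_Mapping.keys U" by fastforce
  obtain U0 where U0: "U = Poly_Mapping.single a 1 + U0" "Poly_Mapping.keys U0 \<subseteq> Poly_Mapping.keys U"
    using a by (rule poly_mapping_remove_key) blast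
  obtain b where b: "b \<in> Poly_Mapping.keys V" "Poly_Mapping.lookup (toric_exp S t b) (z_var S t a) \<noteq> 0"
    using toric_monom_lookup_obtain[OF Suc.prems(3)[symmetric] a lookup_toric_exp_z_var] .
  then have "z_var S t b = z_var S t a"
    using lookup_toric_exp_nonzero_cases[OF b(2)] by (auto simp: y_var_def z_var_def)
  then obtain V' where V': "a \<in> Poly_Mapping.keys V'" "Poly_Mapping.keys V' \<subseteq> S"
    "toric_monom S t V' = toric_monom S t U" "monomial V - monomial V' \<in> (Itilde r t S :: 'k mpoly set)"
    using move_to_key[OF Suc.prems(1) a Suc.prems(2) Suc.prems(3)[symmetric] b(1)] by blast
  obtain V0 where V0: "V' = Poly_Mapping.single a 1 + V0" "Poly_Mapping.keys V0 \<subseteq> Poly_Mapping.keys V'"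
    using V'(1) by (rule poly_mapping_remove_key) blast
  have "toric_exp S t a + toric_monom S t U0 = toric_exp S t a + toric_monom S t V0"
    using V'(3) by (simp add: U0(1) V0(1) toric_monom_add toric_monom_single[simplified])
  then have "toric_monom S t U0 = toric_monom S t V0" by simp
  moreover have "total_degree U0 = n"
    using Suc.hyps(2) by (simp add: U0(1) total_degree_add total_degree_single[simplified])
  ultimately have "monomial U0 - monomial V0 \<in> (Itilde r t S :: 'k mpoly set)"
    using Suc.hyps(1) U0(2) V0(2) Suc.prems(1) V'(2) by blast
  then have "Xv a * (monomial U0 - monomial V0) - (monomial V - monomial V') \<in> (Itilde r t S :: 'k mpoly set)"
    using Suc.prems(1) a subset_gridN
    by (intro ideal_in_diff[OF J _ V'(4)] ideal_in_mult_left[OF J] Xv_in_polyR) auto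
  moreover have "(monomial U :: 'k mpoly) - monomial V =
      Xv a * (monomial U0 - monomial V0) - (monomial V - monomial V')"
    unfolding U0(1) V0(1) monomial_add monomial_single by (simp add: algebra_simps)
  ultimately show ?case by (simp only:)
qed

end

section \<open>The kernel of the monomial map is \<open>P\<^sub>S\<close>\<close>

text \<open>Cancel the coefficient of one key, either outright (keys outside \<open>B\<close>) or against another
  key of its fibre, which exists because the fibre sum vanishes; then induct on the number of keys.\<close>

lemma in_span_if_fibre_sums_vanish:
  fixes f :: "'a \<Rightarrow>\<^sub>0 'b::ab_group_add" and g :: "'a \<Rightarrow> 'c"
  assumes zero: "0 \<in> J" and diff: "\<And>x y. x \<in> J \<Longrightarrow> y \<in> J \<Longrightarrow> x - y \<in> J"
    and A: "finite A" "Poly_Mapping.keys f \<subseteq> A"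
    and outside: "\<And>m c. m \<in> A \<Longrightarrow> m \<notin> B \<Longrightarrow> Poly_Mapping.single m c \<in> J"
    and fibre: "\<And>m m' c. m \<in> A \<inter> B \<Longrightarrow> m' \<in> A \<inter> B \<Longrightarrow> g m = g m' \<Longrightarrow>
      Poly_Mapping.single m c - Poly_Mapping.single m' c \<in> J"
    and "\<And>v. (\<Sum>m\<in>A. if m \<in> B \<and> g m = v then Poly_Mapping.lookup f m else 0) = 0"
  shows "f \<in> J"
  using A(2) assms(7)
proof (induction "card (Poly_Mapping.keys f)" arbitrary: f rule: less_induct)
  case less
  define fsum where "fsum h v = (\<Sum>m\<in>A. if m \<in> B \<and> g m = v then Poly_Mapping.lookup h m else 0)"
    for h :: "'a \<Rightarrow>\<^sub>0 'b" and v
  have fsum_single: "fsum (Poly_Mapping.single k c) v = (if k \<in> B \<and> g k = v then c else 0)"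
    if "k \<in> A" for k c v
  proof -
    have "fsum (Poly_Mapping.single k c) v = (\<Sum>m\<in>A. if m = k then (if k \<in> B \<and> g k = v then c else 0) else 0)"
      unfolding fsum_def by (rule sum.cong) (auto simp: lookup_single when_def)
    then show ?thesis using that A(1) by simp
  qed
  have fsum_diff: "fsum (h1 - h2) v = fsum h1 v - fsum h2 v" for h1 h2 v
    unfolding fsum_def sum_subtractf[symmetric] by (rule sum.cong) (auto simp: lookup_minus)
  show ?case
  proof (cases "f = 0")
    case True
    then show ?thesis using zero by simp
  next
    case False
    then obtain m where m: "m \<in> Poly_Mapping.keys f" by fastforce
    define c where "c = Poly_Mapping.lookup f m"
    have mA: "m \<in> A" using m less.prems(1) by blast
    obtain h where h: "h \<in> J" "Poly_Mapping.lookup h m = c"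
      "Poly_Mapping.keys h \<subseteq> Poly_Mapping.keys f" "\<And>v. fsum h v = 0"
    proof (cases "m \<in> B")
      case True
      have "fsum f (g m) = c + (\<Sum>m'\<in>A - {m}. if m' \<in> B \<and> g m' = g m then Poly_Mapping.lookup f m' else 0)"
        unfolding fsum_def using True mA A(1) by (simp add: sum.remove c_def)
      moreover have "fsum f (g m) = 0" "c \<noteq> 0"
        using less.prems(2) m by (auto simp: fsum_def c_def in_keys_iff)
      ultimately have "(\<Sum>m'\<in>A - {m}. if m' \<in> B \<and> g m' = g m then Poly_Mapping.lookup f m' else 0) \<noteq> 0"
        by (simp add: add_eq_0_iff2)
      then obtain m' where "m' \<in> A - {m}"
        "(if m' \<in> B \<and> g m' = g m then Poly_Mapping.lookup f m' else 0) \<noteq> 0"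
        by (rule sum.not_neutral_contains_not_neutral)
      then have m': "m' \<in> A - {m}" "m' \<in> B \<and> g m' = g m" "Poly_Mapping.lookup f m' \<noteq> 0"
        by (auto split: if_splits)
      show ?thesis
      proof (rule that)
        show "Poly_Mapping.single m c - Poly_Mapping.single m' c \<in> J"
          using fibre[of m m' c] True mA m' by auto
        show "Poly_Mapping.lookup (Poly_Mapping.single m c - Poly_Mapping.single m' c) m = c"
          using m' by (auto simp: lookup_minus lookup_single when_def)
        show "Poly_Mapping.keys (Poly_Mapping.single m c - Poly_Mapping.single m' c) \<subseteq> Poly_Mapping.keys f"
          using keys_diff[of "Poly_Mapping.single m c" "Poly_Mapping.single m' c"] m m'(3)
          by (auto simp: in_keys_iff split: if_splits)
        show "fsum (Poly_Mapping.single m c - Poly_Mapping.single m' c) v = 0" for v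
          using True m' mA by (simp add: fsum_diff fsum_single)
      qed
    next
      case False
      show ?thesis
        by (rule that[of "Poly_Mapping.single m c"])
          (use False mA m in \<open>auto simp: outside fsum_single\<close>)
    qed
    define f' where "f' = f - h"
    have "Poly_Mapping.keys f' \<subseteq> Poly_Mapping.keys f - {m}"
      using h(2,3) keys_diff[of f h] by (auto simp: f'_def c_def in_keys_iff lookup_minus)
    then have "card (Poly_Mapping.keys f') \<le> card (Poly_Mapping.keys f - {m})"
      by (intro card_mono) auto
    also have "\<dots> < card (Poly_Mapping.keys f)"
      using m by (intro card_Diff1_less) auto
    finally have "card (Poly_Mapping.keys f') < card (Poly_Mapping.keys f)" .
    moreover have "fsum f' v = 0" for v
      using less.prems(2) h(4) unfolding f'_def fsum_diff by (simp add: fsum_def)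
    moreover have "Poly_Mapping.keys f' \<subseteq> A"
      using \<open>Poly_Mapping.keys f' \<subseteq> _\<close> less.prems(1) by blast
    ultimately have "f' \<in> J"
      by (intro less.hyps) (auto simp: fsum_def)
    then have "f' - (0 - h) \<in> J" by (rule diff[OF _ diff[OF zero h(1)]])
    then show ?thesis by (simp add: f'_def)
  qed
qed

context switchable_set
begin

lemma single_in_PS_if_not_subset:
  assumes "Poly_Mapping.keys m \<subseteq> gridN r" "\<not> Poly_Mapping.keys m \<subseteq> S"
  shows "Poly_Mapping.single m c \<in> (PS r t S :: 'k::field mpoly set)"
proof -
  obtain a where a: "a \<in> Poly_Mapping.keys m" "a \<notin> S" using assms(2) by blast
  obtain m0 where m0: "m = Poly_Mapping.single a 1 + m0" "Poly_Mapping.keys m0 \<subseteq> Poly_Mapping.keys m"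
    using a(1) by (rule poly_mapping_remove_key) blast
  have "Poly_Mapping.single m0 c \<in> (polyR r :: 'k mpoly set)"
    using m0(2) assms(1) by (intro polyR_single) blast
  moreover have "Xv a \<in> (PS r t S :: 'k mpoly set)"
    using a assms(1) subset_gridN by (intro Xv_in_PS) auto
  ultimately have "Xv a * Poly_Mapping.single m0 c \<in> (PS r t S :: 'k mpoly set)"
    by (rule ideal_in_mult_right[OF PS_ideal[OF subset_gridN]])
  then show ?thesis by (simp add: Xv_def m0(1) mult_single)
qed

lemma toric_kernel_subset_PS: "toric_kernel r t S \<subseteq> (PS r t S :: 'k::field mpoly set)"
proof
  fix f :: "'k mpoly" assume "f \<in> toric_kernel r t S"
  then have f: "f \<in> polyR r" "toric_hom S t f = 0" by (auto simp: toric_kernel_def)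
  let ?P = "PS r t S :: 'k mpoly set"
  have PS: "ideal_in (polyR r) ?P" by (rule PS_ideal[OF subset_gridN])
  show "f \<in> PS r t S"
  proof (rule in_span_if_fibre_sums_vanish[where A = "Poly_Mapping.keys f"
        and B = "{m. Poly_Mapping.keys m \<subseteq> S}" and g = "toric_monom S t"])
    show "0 \<in> ?P" by (rule ideal_in_zero[OF PS])
    show "x - y \<in> ?P" if "x \<in> ?P" "y \<in> ?P" for x y
      by (rule ideal_in_diff[OF PS that])
    show "Poly_Mapping.single m c \<in> ?P"
      if "m \<in> Poly_Mapping.keys f" "m \<notin> {m. Poly_Mapping.keys m \<subseteq> S}" for m c
      using that f(1) by (intro single_in_PS_if_not_subset) (auto simp: polyR_def)
    show "Poly_Mapping.single m c - Poly_Mapping.single m' c \<in> ?P"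
      if "m \<in> Poly_Mapping.keys f \<inter> {m. Poly_Mapping.keys m \<subseteq> S}"
        "m' \<in> Poly_Mapping.keys f \<inter> {m. Poly_Mapping.keys m \<subseteq> S}"
        "toric_monom S t m = toric_monom S t m'" for m m' c
    proof -
      have "monomial m - monomial m' \<in> (Itilde r t S :: 'k mpoly set)"
        using that by (intro binomial_in_Itilde) auto
      moreover have "Poly_Mapping.single 0 c \<in> (polyR r :: 'k mpoly set)"
        by (simp add: polyR_single)
      ultimately have "Poly_Mapping.single 0 c * (monomial m - monomial m') \<in> (Itilde r t S :: 'k mpoly set)"
        by (intro ideal_in_mult_left[OF Itilde_ideal[OF subset_gridN]])
      moreover have "Poly_Mapping.single 0 c * (monomial m - monomial m') =
          Poly_Mapping.single m c - Poly_Mapping.single m' (c :: 'k)"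
        by (simp add: monomial_def mult_single right_diff_distrib)
      ultimately show ?thesis using Itilde_subset_PS[OF subset_gridN] by auto
    qed
    show "(\<Sum>m\<in>Poly_Mapping.keys f. if m \<in> {m. Poly_Mapping.keys m \<subseteq> S} \<and> toric_monom S t m = v
        then Poly_Mapping.lookup f m else 0) = 0" for v
      using f(2) lookup_toric_hom[of S t f v] by simp
  qed simp_all
qed

lemma PS_eq_toric_kernel: "PS r t S = (toric_kernel r t S :: 'k::field mpoly set)"
  using PS_subset_toric_kernel toric_kernel_subset_PS by blast

lemma PS_prime: "prime_in (polyR r) (PS r t S :: 'k::field mpoly set)"
  unfolding PS_eq_toric_kernel by (rule toric_kernel_prime)

lemma Iideal_subset_PS: "Iideal r t \<subseteq> (PS r t S :: 'k::field mpoly set)"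
  unfolding PS_eq_toric_kernel by (rule Iideal_subset_toric_kernel)

lemma Xv_in_PS_iff: "a \<in> gridN r \<Longrightarrow> Xv a \<in> (PS r t S :: 'k::field mpoly set) \<longleftrightarrow> a \<notin> S"
proof
  assume "a \<in> gridN r" "Xv a \<in> (PS r t S :: 'k mpoly set)"
  then show "a \<notin> S" using Xv_notin_toric_kernel PS_eq_toric_kernel by blast
qed (rule Xv_in_PS[OF _ _ subset_gridN])

end

section \<open>Minimal primes over \<open>I\<^sup>\<langle>\<^sup>t\<^sup>\<rangle>\<close>\<close>

definition nonzero_points :: "nat list \<Rightarrow> 'k::field mpoly set \<Rightarrow> nat list set" where
  "nonzero_points r P = {a \<in> gridN r. Xv a \<notin> P}"

lemma switchable_nonzero_points:
  assumes P: "prime_in (polyR r) P" "Iideal r t \<subseteq> P"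
  shows "switchable r t (nonzero_points r P)"
  unfolding switchable_def
proof (intro conjI ballI allI impI)
  show "nonzero_points r P \<subseteq> gridN r" by (auto simp: nonzero_points_def)
next
  fix a b i assume "a \<in> nonzero_points r P" "b \<in> nonzero_points r P" and d: "dist a b = 2" and i: "i < t"
  then have a: "a \<in> gridN r" "Xv a \<notin> P" and b: "b \<in> gridN r" "Xv b \<notin> P"
    by (auto simp: nonzero_points_def)
  have "Xv (sw i a b) \<notin> P"
  proof
    assume "Xv (sw i a b) \<in> P"
    then have "Xv (sw i a b) * Xv (sw i b a) \<in> P"
      using b(1) a(1) by (intro ideal_in_mult_right[OF prime_inD(1)[OF P(1)]] Xv_in_polyR sw_in_gridN)
    moreover have "fpol i a b \<in> P" using fpol_in_Iideal[OF a(1) b(1) d i] P(2) by blast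
    ultimately have "Xv a * Xv b \<in> P"
      using ideal_in_add[OF prime_inD(1)[OF P(1)]] unfolding fpol_def by fastforce
    then show False
      using prime_inD(2)[OF P(1) Xv_in_polyR[OF a(1)] Xv_in_polyR[OF b(1)]] a(2) b(2) by blast
  qed
  then show "sw i a b \<in> nonzero_points r P"
    using sw_in_gridN[OF a(1) b(1)] by (simp add: nonzero_points_def)
qed

context switchable_set
begin

lemma fpol_in_prime_if_connected:
  fixes P :: "'k::field mpoly set"
  assumes P: "prime_in (polyR r) P" "Iideal r t \<subseteq> P" and S_P: "\<And>a. a \<in> S \<Longrightarrow> Xv a \<notin> P"
    and ab: "connected_in S a b" and i: "i < t"
  shows "fpol i a b \<in> P"
proof -
  have PI: "ideal_in (polyR r) P" using P(1) by (rule prime_inD)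
  have XR: "x \<in> S \<Longrightarrow> Xv x \<in> polyR r" for x using subset_gridN by (intro Xv_in_polyR) auto
  let ?\<alpha> = "a ! i" and ?\<beta> = "b ! i"
  let ?g = "\<lambda>p. Xv a * Xv (p[i := ?\<beta>]) - Xv (a[i := ?\<beta>]) * Xv (p[i := ?\<alpha>]) :: 'k mpoly"
  have aS: "a \<in> S" using connected_inD[OF ab] by simp
  have il: "i < length r" using i t_le_length by simp
  have walk: "?g p \<in> P" if "(adj_in S)\<^sup>*\<^sup>* a p" for p
    using that
  proof (induction rule: rtranclp_induct)
    case base
    show ?case using ideal_in_zero[OF PI] by (simp add: mult.commute)
  next
    case (step p q)
    have pS: "p \<in> S" and qS: "q \<in> S" and dpq: "dist p q \<le> 1" using step(2) by (auto simp: adj_in_def)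
    have ap: "connected_in S a p" using step(1) aS pS by (simp add: connected_in_iff_adj_in)
    have aq: "connected_in S a q" using ap connected_in_adjI[OF pS qS dpq] by (rule connected_in_trans)
    have mem: "x[i := a ! i] \<in> S" "x[i := b ! i] \<in> S" if "connected_in S a x" for x
      using update_mem[OF connected_sym[OF that] i] update_mem[OF connected_in_trans[OF connected_sym[OF that] ab] i]
      by auto
    have lp: "length p = length r" "length q = length r" using pS qS length_mem by auto
    from dist_le_1_cases[OF _ dpq] lp
    consider "q = p" | j y where "j < length p" "q = p[j := y]" "p ! j \<noteq> y" by force
    then show ?case
    proof cases
      case 1
      then show ?thesis using step(3) by simp
    next
      case (2 j y)
      show ?thesis
      proof (cases "j = i \<or> ?\<alpha> = ?\<beta>")
        case True
        then show ?thesis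
        proof
          assume "j = i"
          then show ?thesis using step(3) 2(2) by simp
        next
          assume "?\<alpha> = ?\<beta>"
          then have "a[i := ?\<beta>] = a" by (metis list_update_id)
          then show ?thesis using ideal_in_zero[OF PI] \<open>?\<alpha> = ?\<beta>\<close> by (simp add: mult.commute)
        qed
      next
        case False
        have "fpol i (p[i := ?\<alpha>]) (q[i := ?\<beta>]) \<in> Iideal r t"
        proof (rule fpol_in_Iideal[OF _ _ _ i])
          show "p[i := ?\<alpha>] \<in> gridN r" "q[i := ?\<beta>] \<in> gridN r"
            using mem[OF ap] mem[OF aq] subset_gridN by auto
          show "dist (p[i := ?\<alpha>]) (q[i := ?\<beta>]) = 2"
            using dist_update_pair[OF 2(2,3)] False 2(1) lp il by auto
        qed
        then have "fpol i (p[i := ?\<alpha>]) (q[i := ?\<beta>]) \<in> P" using P(2) by blast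
        then have gen: "Xv (p[i := ?\<alpha>]) * Xv (q[i := ?\<beta>]) - Xv (p[i := ?\<beta>]) * Xv (q[i := ?\<alpha>]) \<in> P"
          using sw_update_pair[OF 2(2), of i] False lp il unfolding fpol_def by auto
        have "Xv (p[i := ?\<alpha>]) * ?g q =
            Xv a * (Xv (p[i := ?\<alpha>]) * Xv (q[i := ?\<beta>]) - Xv (p[i := ?\<beta>]) * Xv (q[i := ?\<alpha>])) +
            Xv (q[i := ?\<alpha>]) * ?g p"
          by (simp add: algebra_simps)
        also have "\<dots> \<in> P"
          using mem[OF aq] aS by (intro ideal_in_add[OF PI] ideal_in_mult_left[OF PI] XR gen step(3))
        finally have "Xv (p[i := ?\<alpha>]) \<in> P \<or> ?g q \<in> P"
          using mem[OF ap] mem[OF aq] aS update_mem[OF ab i] XR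
          by (intro prime_inD(2)[OF P(1)] polyR_diff polyR_mult) auto
        then show ?thesis using S_P mem[OF ap] by blast
      qed
    qed
  qed
  have "?g b \<in> P" by (rule walk) (use ab in \<open>simp add: connected_in_iff_adj_in\<close>)
  then show ?thesis by (simp add: fpol_def sw_def)
qed

lemma PS_subset_prime:
  fixes P :: "'k::field mpoly set"
  assumes "prime_in (polyR r) P" "Iideal r t \<subseteq> P" "S = nonzero_points r P"
  shows "PS r t S \<subseteq> P"
proof (rule PS_least)
  show "ideal_in (polyR r) P" using assms(1) by (rule prime_inD)
  show "Xv a \<in> P" if "a \<in> gridN r" "a \<notin> S" for a
    using that assms(3) by (simp add: nonzero_points_def)
  show "fpol i a b \<in> P" if "i < t" "connected_in S a b" for i a b
    using assms that by (intro fpol_in_prime_if_connected) (auto simp: nonzero_points_def)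
qed

lemma minimal_prime_eq_PS:
  assumes "minimal_prime_over (polyR r) (Iideal r t) P" "PS r t S \<subseteq> P"
  shows "P = PS r t S"
  using assms PS_prime Iideal_subset_PS unfolding minimal_prime_over_def by blast

end

lemma max_switchable_if_minimal_prime:
  assumes "switchable_set r t S"
    and "minimal_prime_over (polyR r) (Iideal r t) (PS r t S :: 'k::field mpoly set)"
  shows "max_switchable TYPE('k) r t S"
  unfolding max_switchable_def
proof (intro conjI allI impI)
  interpret S: switchable_set r t S by (rule assms(1))
  show "switchable r t S" by (rule S.switchable)
  fix T assume T: "switchable r t T \<and> S \<subset> T"
  interpret T: switchable_set r t T using T S.t_le_length by unfold_locales auto
  obtain a where a: "a \<in> T" "a \<notin> S" using T by blast
  then have "Xv a \<in> (PS r t S :: 'k mpoly set)" "Xv a \<notin> (PS r t T :: 'k mpoly set)"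
    using S.Xv_in_PS_iff T.Xv_in_PS_iff T.subset_gridN by auto
  moreover have "PS r t T \<subseteq> (PS r t S :: 'k mpoly set) \<Longrightarrow> PS r t T = (PS r t S :: 'k mpoly set)"
    using assms(2) T.PS_prime T.Iideal_subset_PS unfolding minimal_prime_over_def by blast
  ultimately show "\<not> (PS r t S :: 'k mpoly set) \<subseteq> PS r t T" "\<not> (PS r t T :: 'k mpoly set) \<subseteq> PS r t S"
    by auto
qed

theorem theorem4p11:
  fixes r :: "nat list" and t :: nat and P :: "'k::field mpoly set"
  assumes "length r \<ge> 1"
    and "\<forall>i<length r. r ! i \<ge> 1"
    and "1 \<le> t" and "t \<le> length r"
    and "minimal_prime_over (polyR r) (Iideal r t) P"
  shows "\<exists>S. max_switchable TYPE('k) r t S \<and> P = PS r t S"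
proof -
  have P: "prime_in (polyR r) P" "Iideal r t \<subseteq> P"
    using assms(5) by (auto simp: minimal_prime_over_def)
  define S where "S = nonzero_points r P"
  interpret switchable_set r t S
    using switchable_nonzero_points[OF P] assms(4) unfolding S_def by unfold_locales
  have "P = PS r t S"
    using minimal_prime_eq_PS[OF assms(5) PS_subset_prime[OF P S_def]] .
  moreover have "max_switchable TYPE('k) r t S"
    using max_switchable_if_minimal_prime[OF switchable_set_axioms] assms(5) calculation by simp
  ultimately show ?thesis by blast
qed

end
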